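(* Let $\langle A,f,g\rangle$ be a PS-algebra satisfying (ABT2$^{\mathrm s}$): for all $a,b\in A$, if $b\neq0$ then $a\leq f(a,b)$. Then it satisfies (ABT0): $x\leq f(x,x)$ for all $x$, and (ABT2): $y\cdot f(x,z)\leq f(x\cdot f(x,y),z)$ for all $x,y,z$. Consequently every strong betweenness algebra is a betweenness algebra.
   Context: A PS-algebra is $\langle A,f,g\rangle$ where $A$ is a Boolean algebra with at least two elements (operations $+,\cdot,-,0,1$) and $f,g\colon A^2\to A$ satisfy: $f(x,y)=0$ whenever $x=0$ or $y=0$; $f$ is additive in each argument; $g(x,y)=1$ whenever $x=0$ or $y=0$; $g$ is co-additive in each argument ($g(x+x',y)=g(x,y)\cdot g(x',y)$, $g(x,y+y')=g(x,y)\cdot g(x,y')$). A betweenness algebra is a PS-algebra satisfying for all $x,y,z$: (ABT0) $x\leq f(x,x)$; (ABT1$_f$) $f(x,y)\leq f(y,x)$; (ABT1$_g$) $g(x,y)\leq g(y,x)$; (ABT2) $y\cdot f(x,z)\leq f(x\cdot f(x,y),z)$; (ABT3) $f(x,g(x,-y)\cdot y)\leq y$; (wMIA) $x\neq0$, $y\neq0\Rightarrow g(x,y)\leq f(x,y)$. A strong betweenness algebra is a PS-algebra satisfying (ABT1$_f$), (ABT1$_g$), (ABT3), (wMIA) and (ABT2$^{\mathrm s}$). *)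

theory Defs
  imports Main
begin

text \<open>Boolean algebra operations: + is sup, \<cdot> is inf, - is uminus, 0 is bot, 1 is top.\<close>

definition ps_algebra :: "('a::boolean_algebra \<Rightarrow> 'a \<Rightarrow> 'a) \<Rightarrow> ('a \<Rightarrow> 'a \<Rightarrow> 'a) \<Rightarrow> bool" where
  "ps_algebra f g \<longleftrightarrow>
     (bot::'a) \<noteq> top \<and>
     (\<forall>x y. (x = bot \<or> y = bot) \<longrightarrow> f x y = bot) \<and>
     (\<forall>x x' y. f (sup x x') y = sup (f x y) (f x' y)) \<and>
     (\<forall>x y y'. f x (sup y y') = sup (f x y) (f x y')) \<and>
     (\<forall>x y. (x = bot \<or> y = bot) \<longrightarrow> g x y = top) \<and>
     (\<forall>x x' y. g (sup x x') y = inf (g x y) (g x' y)) \<and>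
     (\<forall>x y y'. g x (sup y y') = inf (g x y) (g x y'))"

definition ABT0 :: "('a::boolean_algebra \<Rightarrow> 'a \<Rightarrow> 'a) \<Rightarrow> bool" where
  "ABT0 f \<longleftrightarrow> (\<forall>x. x \<le> f x x)"

definition ABT1f :: "('a::boolean_algebra \<Rightarrow> 'a \<Rightarrow> 'a) \<Rightarrow> bool" where
  "ABT1f f \<longleftrightarrow> (\<forall>x y. f x y \<le> f y x)"

definition ABT1g :: "('a::boolean_algebra \<Rightarrow> 'a \<Rightarrow> 'a) \<Rightarrow> bool" where
  "ABT1g g \<longleftrightarrow> (\<forall>x y. g x y \<le> g y x)"

definition ABT2 :: "('a::boolean_algebra \<Rightarrow> 'a \<Rightarrow> 'a) \<Rightarrow> bool" where
  "ABT2 f \<longleftrightarrow> (\<forall>x y z. inf y (f x z) \<le> f (inf x (f x y)) z)"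

definition ABT2s :: "('a::boolean_algebra \<Rightarrow> 'a \<Rightarrow> 'a) \<Rightarrow> bool" where
  "ABT2s f \<longleftrightarrow> (\<forall>a b. b \<noteq> bot \<longrightarrow> a \<le> f a b)"

definition ABT3 :: "('a::boolean_algebra \<Rightarrow> 'a \<Rightarrow> 'a) \<Rightarrow> ('a \<Rightarrow> 'a \<Rightarrow> 'a) \<Rightarrow> bool" where
  "ABT3 f g \<longleftrightarrow> (\<forall>x y. f x (inf (g x (- y)) y) \<le> y)"

definition wMIA :: "('a::boolean_algebra \<Rightarrow> 'a \<Rightarrow> 'a) \<Rightarrow> ('a \<Rightarrow> 'a \<Rightarrow> 'a) \<Rightarrow> bool" where
  "wMIA f g \<longleftrightarrow> (\<forall>x y. x \<noteq> bot \<longrightarrow> y \<noteq> bot \<longrightarrow> g x y \<le> f x y)"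

definition betweenness_algebra :: "('a::boolean_algebra \<Rightarrow> 'a \<Rightarrow> 'a) \<Rightarrow> ('a \<Rightarrow> 'a \<Rightarrow> 'a) \<Rightarrow> bool" where
  "betweenness_algebra f g \<longleftrightarrow> ps_algebra f g \<and> ABT0 f \<and> ABT1f f \<and> ABT1g g \<and>
     ABT2 f \<and> ABT3 f g \<and> wMIA f g"

definition strong_betweenness_algebra :: "('a::boolean_algebra \<Rightarrow> 'a \<Rightarrow> 'a) \<Rightarrow> ('a \<Rightarrow> 'a \<Rightarrow> 'a) \<Rightarrow> bool" where
  "strong_betweenness_algebra f g \<longleftrightarrow> ps_algebra f g \<and> ABT1f f \<and> ABT1g g \<and>
     ABT3 f g \<and> wMIA f g \<and> ABT2s f"

end

theory Submission
  imports Defs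
begin

text \<open>Both consequences only need (ABT2s): at a nonzero second argument it makes
  \<open>x \<cdot> f(x,y)\<close> collapse to \<open>x\<close>, and the zero cases hold in any Boolean algebra.\<close>

lemma ABT2s_imp_ABT0:
  fixes f :: "'a::boolean_algebra \<Rightarrow> 'a \<Rightarrow> 'a"
  assumes "ABT2s f"
  shows "ABT0 f"
  unfolding ABT0_def
proof
  fix x :: 'a
  show "x \<le> f x x"
    using assms unfolding ABT2s_def by (cases "x = bot") auto
qed

lemma ABT2s_imp_ABT2:
  fixes f :: "'a::boolean_algebra \<Rightarrow> 'a \<Rightarrow> 'a"
  assumes "ABT2s f"
  shows "ABT2 f"
  unfolding ABT2_def
proof (intro allI)
  fix x y z :: 'a
  show "inf y (f x z) \<le> f (inf x (f x y)) z"
  proof (cases "y = bot")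
    case False
    then have "inf x (f x y) = x"
      using assms unfolding ABT2s_def by (simp add: inf_absorb1)
    then show ?thesis by simp
  qed simp
qed

lemma strong_betweenness_algebra_imp_betweenness_algebra:
  fixes f g :: "'a::boolean_algebra \<Rightarrow> 'a \<Rightarrow> 'a"
  assumes "strong_betweenness_algebra f g"
  shows "betweenness_algebra f g"
  using assms ABT2s_imp_ABT0 ABT2s_imp_ABT2
  unfolding strong_betweenness_algebra_def betweenness_algebra_def by blast

theorem proposition27:
  fixes f g :: "'a::boolean_algebra \<Rightarrow> 'a \<Rightarrow> 'a"
  shows "(ps_algebra f g \<and> ABT2s f \<longrightarrow> ABT0 f \<and> ABT2 f) \<and>
         (strong_betweenness_algebra f g \<longrightarrow> betweenness_algebra f g)"
  using ABT2s_imp_ABT0 ABT2s_imp_ABT2 strong_betweenness_algebra_imp_betweenness_algebra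
  by blast

end
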